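(* Let $N$ be a prime and let $f$ be a function satisfying the standing assumptions in the context. Let $X,Y,Z \subseteq \mathbb{Z}/N\mathbb{Z}$ and $0<\delta_1\le\delta_2$ be such that for each $x\in X$ the number of $y\in Y$ with $-x-y\in Z$ lies between $\delta_1 N$ and $\delta_2 N$, and the same holds with the roles of $X$, $Y$, $Z$ permuted (i.e. for each $y \in Y$ the number of $z\in Z$ with $-y-z\in X$ lies between $\delta_1N$ and $\delta_2N$, and similarly for each element of each set, with any ordering of the other two sets). Then $$|X| \le K \frac{\delta_2}{\delta_1} f(\delta_2^{-1}) N$$ for an absolute constant $K$, and the analogous inequalities hold for $|Y|$ and $|Z|$.
   Context: An additive matching in a finite abelian group $G$ is a collection of triples $(x_i,y_i,z_i)$, $i=1,\dots,m$, of elements of $G$ with $x_i + y_j + z_k = 0$ if and only if $i=j=k$; its size is $m$. Standing assumptions: $f$ is a positive function such that for every $M$, every additive matching in $\mathbb{Z}/M\mathbb{Z}$ has size at most $f(M)M$; $f$ is decreasing, while $Af(A)<Bf(B)$ whenever $A<B$. *)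

theory Defs
  imports "HOL-Number_Theory.Number_Theory"
begin

definition additive_matching ::
  "nat \<Rightarrow> nat \<Rightarrow> (nat \<Rightarrow> int) \<Rightarrow> (nat \<Rightarrow> int) \<Rightarrow> (nat \<Rightarrow> int) \<Rightarrow> bool" where
  "additive_matching M m x y z \<longleftrightarrow>
     (\<forall>i<m. \<forall>j<m. \<forall>k<m. ([x i + y j + z k = 0] (mod int M) \<longleftrightarrow> (i = j \<and> j = k)))"

definition matching_bound_fun :: "(real \<Rightarrow> real) \<Rightarrow> bool" where
  "matching_bound_fun f \<longleftrightarrow>
     (\<forall>x>0. f x > 0) \<and>
     (\<forall>M m x y z. M \<ge> 1 \<longrightarrow> additive_matching M m x y z \<longrightarrow> real m \<le> f (real M) * real M) \<and>
     (\<forall>a b. 0 < a \<longrightarrow> a \<le> b \<longrightarrow> f b \<le> f a) \<and>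
     (\<forall>a b. 0 < a \<longrightarrow> a < b \<longrightarrow> a * f a < b * f b)"

text \<open>Subsets of Z/NZ are represented as sets of integers in {0..<N}.
  For every a in A, the number of b in B with -a-b in C lies in [d1 N, d2 N].\<close>
definition degree_bounds ::
  "nat \<Rightarrow> real \<Rightarrow> real \<Rightarrow> int set \<Rightarrow> int set \<Rightarrow> int set \<Rightarrow> bool" where
  "degree_bounds N d1 d2 A B C \<longleftrightarrow>
     (\<forall>a\<in>A. d1 * real N \<le> real (card {b\<in>B. (- a - b) mod int N \<in> C}) \<and>
             real (card {b\<in>B. (- a - b) mod int N \<in> C}) \<le> d2 * real N)"

end

theory Submission
  imports Defs
begin

text \<open>
  For a step l \<noteq> 0 and shifts s, t, look at the L \<times> L grid of pairs (i, j) such that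
  s + l i \<in> X, t + l j \<in> Y and -(s + t) - l (i + j) \<in> Z (mod N). If such a pair has no
  other grid point in its row, its column or its antidiagonal, the triples (i, j, -(i + j))
  over these isolated pairs form an additive matching in Z/2LZ. Averaging over all
  (N - 1) N^2 parameters, every solution of x + y + z = 0 in X \<times> Y \<times> Z lies on (N - 1) L^2
  grids, while two solutions sharing a line of the grid are rare because all degrees are at
  most \<delta>2 N and two terms of a progression modulo a prime determine it. For L about 1 / (7 \<delta>2)
  at least half of the grid points are isolated on average, so some grid carries a matching of
  size at least L^2 |X| \<delta>1 N / (2 N^2); comparing with the bound 2L f(2L) < f(1/\<delta>2) / \<delta>2
  gives the claim.
\<close>

lemma eq_if_dvd_diff_int:
  fixes u v n :: int
  assumes "0 \<le> u" "u < n" "0 \<le> v" "v < n" "n dvd u - v"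
  shows "u = v"
  using assms by (metis mod_eq_dvd_iff mod_pos_pos_trivial)

definition near :: "int \<times> int \<Rightarrow> int \<times> int \<Rightarrow> bool" where
  "near g g' \<longleftrightarrow> fst g = fst g' \<or> snd g = snd g' \<or> fst g + snd g = fst g' + snd g'"

definition isolated_points :: "(int \<times> int) set \<Rightarrow> (int \<times> int) set" where
  "isolated_points S = {g \<in> S. \<forall>g'\<in>S. near g g' \<longrightarrow> g' = g}"

definition row_collisions :: "(int \<times> int) set \<Rightarrow> ((int \<times> int) \<times> (int \<times> int)) set" where
  "row_collisions S = {(g, g'). g \<in> S \<and> g' \<in> S \<and> fst g = fst g' \<and> snd g \<noteq> snd g'}"

definition column_collisions :: "(int \<times> int) set \<Rightarrow> ((int \<times> int) \<times> (int \<times> int)) set" where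
  "column_collisions S = {(g, g'). g \<in> S \<and> g' \<in> S \<and> snd g = snd g' \<and> fst g \<noteq> fst g'}"

definition antidiagonal_collisions :: "(int \<times> int) set \<Rightarrow> ((int \<times> int) \<times> (int \<times> int)) set" where
  "antidiagonal_collisions S =
     {(g, g'). g \<in> S \<and> g' \<in> S \<and> fst g + snd g = fst g' + snd g' \<and> fst g \<noteq> fst g'}"

lemma collisions_subset:
  "row_collisions S \<subseteq> S \<times> S" "column_collisions S \<subseteq> S \<times> S" "antidiagonal_collisions S \<subseteq> S \<times> S"
  by (auto simp: row_collisions_def column_collisions_def antidiagonal_collisions_def)

lemma finite_collisions:
  assumes "finite S"
  shows "finite (row_collisions S)" "finite (column_collisions S)" "finite (antidiagonal_collisions S)"
  using collisions_subset[of S] assms by (meson finite_SigmaI finite_subset)+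

lemma card_le_isolated_points_plus_collisions:
  assumes "finite S"
  shows "card S \<le> card (isolated_points S) + card (row_collisions S) + card (column_collisions S)
                   + card (antidiagonal_collisions S)"
proof -
  let ?coll = "row_collisions S \<union> column_collisions S \<union> antidiagonal_collisions S"
  have fin_coll: "finite ?coll"
    using finite_collisions[OF assms] by blast
  have "S \<subseteq> isolated_points S \<union> fst ` ?coll"
  proof
    fix g assume g: "g \<in> S"
    show "g \<in> isolated_points S \<union> fst ` ?coll"
    proof (cases "g \<in> isolated_points S")
      case False
      then obtain g' where "g' \<in> S" "near g g'" "g' \<noteq> g"
        using g unfolding isolated_points_def by auto
      then have "(g, g') \<in> ?coll"
        using g unfolding row_collisions_def column_collisions_def antidiagonal_collisions_def
          near_def by (auto simp: prod_eq_iff)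
      then show ?thesis by force
    qed simp
  qed
  then have "card S \<le> card (isolated_points S \<union> fst ` ?coll)"
    using assms fin_coll by (intro card_mono) (auto simp: isolated_points_def)
  also have "\<dots> \<le> card (isolated_points S) + card ?coll"
    using card_Un_le card_image_le[OF fin_coll, of fst] by (meson add_left_mono order_trans)
  also have "card ?coll \<le> card (row_collisions S) + card (column_collisions S)
                          + card (antidiagonal_collisions S)"
    by (meson add_right_mono card_Un_le order_trans)
  finally show ?thesis by linarith
qed

text \<open>
  The closure hypothesis is what turns isolation into the matching property: if
  x a + y b + z c = 0, then (i a, j b) lies in S and shares a row with point a, a column with
  point b and an antidiagonal with point c.
\<close>
lemma additive_matching_isolated_points:
  assumes S_sub: "S \<subseteq> {0..<int L} \<times> {0..<int L}"
    and S_closed: "\<And>i j i' j' i'' j''. (i, j) \<in> S \<Longrightarrow> (i', j') \<in> S \<Longrightarrow> (i'', j'') \<in> S \<Longrightarrow>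
                     i + j' = i'' + j'' \<Longrightarrow> (i, j') \<in> S"
  shows "\<exists>x y z. additive_matching (2 * L) (card (isolated_points S)) x y z"
proof -
  let ?I = "isolated_points S"
  have "?I \<subseteq> {0..<int L} \<times> {0..<int L}"
    using S_sub by (auto simp: isolated_points_def)
  then have "finite ?I" by (rule finite_subset) simp
  then obtain e where e: "bij_betw e {0..<card ?I} ?I"
    using ex_bij_betw_nat_finite by blast
  define x where "x a = fst (e a)" for a
  define y where "y a = snd (e a)" for a
  define z where "z a = - (fst (e a) + snd (e a))" for a
  have "additive_matching (2 * L) (card ?I) x y z"
    unfolding additive_matching_def
  proof (intro allI impI)
    fix a b c assume abc: "a < card ?I" "b < card ?I" "c < card ?I"
    obtain i1 j1 where a1: "e a = (i1, j1)" by fastforce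
    obtain i2 j2 where b2: "e b = (i2, j2)" by fastforce
    obtain i3 j3 where c3: "e c = (i3, j3)" by fastforce
    have iso: "(i1, j1) \<in> ?I" "(i2, j2) \<in> ?I" "(i3, j3) \<in> ?I"
      using abc e a1 b2 c3 by (metis atLeastLessThan_iff bij_betw_apply zero_le)+
    then have in_S: "(i1, j1) \<in> S" "(i2, j2) \<in> S" "(i3, j3) \<in> S"
      by (auto simp: isolated_points_def)
    have e_inj: "e u = e v \<Longrightarrow> u < card ?I \<Longrightarrow> v < card ?I \<Longrightarrow> u = v" for u v
      using bij_betw_imp_inj_on[OF e] by (simp add: inj_on_def)
    show "[x a + y b + z c = 0] (mod int (2 * L)) \<longleftrightarrow> a = b \<and> b = c"
    proof
      assume "[x a + y b + z c = 0] (mod int (2 * L))"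
      moreover have "x a + y b + z c = (i1 + j2) - (i3 + j3)"
        by (simp add: x_def y_def z_def a1 b2 c3)
      ultimately have "int (2 * L) dvd (i1 + j2) - (i3 + j3)"
        by (simp add: cong_0_iff)
      moreover have "i1 \<in> {0..<int L}" "j2 \<in> {0..<int L}" "i3 \<in> {0..<int L}" "j3 \<in> {0..<int L}"
        using in_S S_sub by blast+
      ultimately have sum_eq: "i1 + j2 = i3 + j3"
        by (intro eq_if_dvd_diff_int[of _ "int (2 * L)"]) auto
      have in_S': "(i1, j2) \<in> S" using S_closed[OF in_S sum_eq] .
      have "(i1, j2) = (i1, j1)"
        using iso(1) in_S' unfolding isolated_points_def near_def by auto
      moreover have "(i1, j2) = (i2, j2)"
        using iso(2) in_S' unfolding isolated_points_def near_def by auto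
      moreover have "(i1, j2) = (i3, j3)"
        using iso(3) in_S' sum_eq unfolding isolated_points_def near_def by auto
      ultimately have "e a = e b" "e b = e c"
        using a1 b2 c3 by simp_all
      then show "a = b \<and> b = c"
        using e_inj abc by blast
    qed (simp add: x_def y_def z_def)
  qed
  then show ?thesis by blast
qed

definition ap_term :: "int \<Rightarrow> int \<Rightarrow> int \<Rightarrow> int \<Rightarrow> int" where
  "ap_term n l s i = (s + l * i) mod n"

lemma minus_mod_diff_mod: "(- (a mod n) - b mod n) mod n = (- a - b) mod (n :: int)"
proof -
  have "(- (a mod n + b mod n)) mod n = (- (a + b)) mod n"
    by (metis mod_minus_cong mod_add_eq)
  then show ?thesis by simp
qed

lemma ap_term_third_vertex:
  "(- ap_term n l s i - ap_term n l t j) mod n = (- s - t - l * (i + j)) mod n"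
  unfolding ap_term_def minus_mod_diff_mod by (simp add: algebra_simps)

lemma ap_term_third_vertex':
  "(- ap_term n l t j - ap_term n l s i) mod n = (- s - t - l * (i + j)) mod n"
  by (metis ap_term_third_vertex minus_diff_commute)

lemma ap_term_from_third_vertex:
  assumes "i + j = i' + j'"
  shows "(- ((- s - t - l * (i + j)) mod n) - ap_term n l s i') mod n = ap_term n l t j'"
proof -
  have "- (- s - t - l * (i + j)) - (s + l * i') = t + l * j'"
    using assms by (simp add: algebra_simps)
  then show ?thesis
    unfolding ap_term_def by (metis minus_mod_diff_mod mod_mod_trivial)
qed

lemma ap_term_through: "ap_term n l ((a - l * i) mod n) i = a mod n"
  unfolding ap_term_def by (simp add: mod_simps)

lemma ap_term_start_inj:
  assumes "0 \<le> s" "s < n" "0 \<le> s'" "s' < n" "ap_term n l s i = ap_term n l s' i"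
  shows "s = s'"
proof -
  have "n dvd (s + l * i) - (s' + l * i)"
    using assms(5) unfolding ap_term_def by (simp only: mod_eq_dvd_iff)
  then show ?thesis
    using assms eq_if_dvd_diff_int by simp
qed

lemma ap_term_determined:
  assumes "prime n"
    and "1 \<le> l" "l < n" "1 \<le> l'" "l' < n" "0 \<le> t" "t < n" "0 \<le> t'" "t' < n"
    and "0 \<le> k" "k < n" "0 \<le> k'" "k' < n" "k \<noteq> k'"
    and "ap_term n l t k = ap_term n l' t' k" "ap_term n l t k' = ap_term n l' t' k'"
  shows "l = l' \<and> t = t'"
proof -
  have dvd_k: "n dvd (t + l * k) - (t' + l' * k)" and dvd_k': "n dvd (t + l * k') - (t' + l' * k')"
    using assms(15,16) unfolding ap_term_def by (simp_all only: mod_eq_dvd_iff)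
  have "(t + l * k) - (t' + l' * k) - ((t + l * k') - (t' + l' * k')) = (l - l') * (k - k')"
    by (simp add: algebra_simps)
  then have "n dvd (l - l') * (k - k')"
    using dvd_diff[OF dvd_k dvd_k'] by simp
  moreover have "\<not> n dvd k - k'"
    using assms(10-14) eq_if_dvd_diff_int by blast
  ultimately have "n dvd l - l'"
    using assms(1) prime_dvd_mult_iff by blast
  then have l_eq: "l = l'"
    using assms(2-5) eq_if_dvd_diff_int by simp
  then have "n dvd t - t'"
    using dvd_k by (simp add: algebra_simps)
  then show ?thesis
    using l_eq assms(6-9) eq_if_dvd_diff_int by blast
qed

lemma card_Sigma_squares_le:
  fixes d :: real
  assumes "finite X" "\<And>x. x \<in> X \<Longrightarrow> finite (F x)" "\<And>x. x \<in> X \<Longrightarrow> real (card (F x)) \<le> d"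
  shows "real (card (SIGMA x:X. F x \<times> F x)) \<le> d * real (card (Sigma X F))"
proof -
  have "real (card (SIGMA x:X. F x \<times> F x)) = (\<Sum>x\<in>X. real (card (F x)) * real (card (F x)))"
    using assms(1,2) by (simp add: card_SigmaI card_cartesian_product)
  also have "\<dots> \<le> (\<Sum>x\<in>X. d * real (card (F x)))"
    using assms(3) by (intro sum_mono mult_right_mono) auto
  also have "\<dots> = d * real (card (Sigma X F))"
    using assms(1,2) by (simp add: card_SigmaI sum_distrib_left)
  finally show ?thesis .
qed

locale progression_grids =
  fixes n :: int and A B C :: "int set" and L :: nat
  assumes prime_n: "prime n"
    and A_sub: "A \<subseteq> {0..<n}" and B_sub: "B \<subseteq> {0..<n}" and C_sub: "C \<subseteq> {0..<n}"
    and L_less: "int L < n"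
begin

definition fibre_A :: "int \<Rightarrow> int set" where
  "fibre_A a = {b \<in> B. (- a - b) mod n \<in> C}"

definition fibre_B :: "int \<Rightarrow> int set" where
  "fibre_B b = {a \<in> A. (- b - a) mod n \<in> C}"

definition fibre_C :: "int \<Rightarrow> int set" where
  "fibre_C c = {a \<in> A. (- c - a) mod n \<in> B}"

text \<open>A pair (a, b) stands for the solution (a, b, (- a - b) mod n) of x + y + z = 0 in A \<times> B \<times> C.\<close>
definition triangles :: "(int \<times> int) set" where
  "triangles = Sigma A fibre_A"

definition params :: "(int \<times> int \<times> int) set" where
  "params = {1..<n} \<times> {0..<n} \<times> {0..<n}"

definition grid :: "int \<times> int \<times> int \<Rightarrow> (int \<times> int) set" where
  "grid = (\<lambda>(l, s, t). {(i, j) \<in> {0..<int L} \<times> {0..<int L}.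
                          (ap_term n l s i, ap_term n l t j) \<in> triangles})"

lemma n_ge_2: "2 \<le> n"
  using prime_n prime_ge_2_int by blast

lemma finite_sets: "finite A" "finite B" "finite C"
  using A_sub B_sub C_sub by (auto intro: finite_subset)

lemma finite_fibres: "finite (fibre_A a)" "finite (fibre_B b)" "finite (fibre_C c)"
  using finite_sets by (simp_all add: fibre_A_def fibre_B_def fibre_C_def)

lemma finite_triangles: "finite triangles"
  using finite_sets finite_fibres by (simp add: triangles_def)

lemma mem_params: "(l, s, t) \<in> params \<longleftrightarrow> 1 \<le> l \<and> l < n \<and> 0 \<le> s \<and> s < n \<and> 0 \<le> t \<and> t < n"
  by (auto simp: params_def)

lemma finite_params: "finite params"
  by (simp add: params_def)

lemma card_params: "real (card params) = (real_of_int n - 1) * (real_of_int n)\<^sup>2"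
  using n_ge_2 by (simp add: params_def card_cartesian_product power2_eq_square)

lemma mem_grid:
  "(i, j) \<in> grid (l, s, t) \<longleftrightarrow> 0 \<le> i \<and> i < int L \<and> 0 \<le> j \<and> j < int L \<and>
     ap_term n l s i \<in> A \<and> ap_term n l t j \<in> B \<and> (- s - t - l * (i + j)) mod n \<in> C"
  by (auto simp: grid_def triangles_def fibre_A_def ap_term_third_vertex)

lemma grid_subset: "grid p \<subseteq> {0..<int L} \<times> {0..<int L}"
  by (auto simp: grid_def)

lemma finite_grid: "finite (grid p)"
  using grid_subset by (rule finite_subset) simp

lemma card_triangles_ge:
  assumes "\<And>a. a \<in> A \<Longrightarrow> d \<le> real (card (fibre_A a))"
  shows "real (card A) * d \<le> real (card triangles)"
proof -
  have "real (card A) * d = (\<Sum>a\<in>A. d)" by simp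
  also have "\<dots> \<le> (\<Sum>a\<in>A. real (card (fibre_A a)))"
    using assms by (rule sum_mono)
  also have "\<dots> = real (card triangles)"
    using finite_sets finite_fibres by (simp add: triangles_def card_SigmaI)
  finally show ?thesis .
qed

lemma card_Sigma_fibre_B_le: "card (Sigma B fibre_B) \<le> card triangles"
proof (rule card_inj_on_le[OF _ _ finite_triangles])
  show "inj_on (\<lambda>(b, a). (a, b)) (Sigma B fibre_B)"
    by (auto simp: inj_on_def)
  show "(\<lambda>(b, a). (a, b)) ` Sigma B fibre_B \<subseteq> triangles"
    by (auto simp: triangles_def fibre_A_def fibre_B_def minus_diff_commute)
qed

lemma card_Sigma_fibre_C_le: "card (Sigma C fibre_C) \<le> card triangles"
proof (rule card_inj_on_le[OF _ _ finite_triangles])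
  show "inj_on (\<lambda>(c, a). (a, (- c - a) mod n)) (Sigma C fibre_C)"
  proof (rule inj_onI, clarsimp)
    fix c c' a assume c: "c \<in> C" "c' \<in> C" and "(- c - a) mod n = (- c' - a) mod n"
    then have "n dvd c' - c" by (simp add: mod_eq_dvd_iff)
    then show "c = c'"
      using c C_sub eq_if_dvd_diff_int[of c' n c] by force
  qed
  show "(\<lambda>(c, a). (a, (- c - a) mod n)) ` Sigma C fibre_C \<subseteq> triangles"
  proof clarify
    fix c a assume c: "c \<in> C" and "a \<in> fibre_C c"
    then have a: "a \<in> A" and b: "(- c - a) mod n \<in> B"
      by (auto simp: fibre_C_def)
    have "a mod n = a" "c mod n = c"
      using a c A_sub C_sub by auto
    then have "(- a - (- c - a) mod n) mod n = c"
      using minus_mod_diff_mod[of a n "- c - a"] by simp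
    then show "(a, (- c - a) mod n) \<in> triangles"
      using a b c by (simp add: triangles_def fibre_A_def)
  qed
qed

lemma additive_matching_grid:
  "\<exists>x y z. additive_matching (2 * L) (card (isolated_points (grid p))) x y z"
proof (rule additive_matching_isolated_points[OF grid_subset])
  fix i j i' j' i'' j''
  assume "(i, j) \<in> grid p" "(i', j') \<in> grid p" "(i'', j'') \<in> grid p" "i + j' = i'' + j''"
  then show "(i, j') \<in> grid p"
    by (cases p rule: prod_cases3) (simp add: mem_grid)
qed

lemma card_triangles_le_sum_card_grid:
  "nat (n - 1) * L\<^sup>2 * card triangles \<le> (\<Sum>p\<in>params. card (grid p))"
proof -
  let ?R = "{0..<int L}"
  let ?Q = "{1..<n} \<times> (?R \<times> ?R) \<times> triangles"
  define h where "h = (\<lambda>(l :: int, (i :: int, j :: int), (a :: int, b :: int)).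
                        ((l, (a - l * i) mod n, (b - l * j) mod n), (i, j)))"
  have mod_self: "x mod n = x" if "x \<in> A \<union> B" for x
    using that A_sub B_sub by auto
  have "inj_on h ?Q"
  proof (rule inj_onI)
    fix u v assume "u \<in> ?Q" "v \<in> ?Q" and huv: "h u = h v"
    obtain l i j a b where u: "u = (l, (i, j), (a, b))" by (metis prod.exhaust)
    obtain l' i' j' a' b' where v: "v = (l', (i', j'), (a', b'))" by (metis prod.exhaust)
    have ab: "a \<in> A" "b \<in> B" "a' \<in> A" "b' \<in> B"
      using \<open>u \<in> ?Q\<close> \<open>v \<in> ?Q\<close> by (auto simp: u v triangles_def fibre_A_def)
    have "l = l'" "i = i'" "j = j'" and
      "ap_term n l ((a - l * i) mod n) i = ap_term n l ((a' - l * i) mod n) i"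
      "ap_term n l ((b - l * j) mod n) j = ap_term n l ((b' - l * j) mod n) j"
      using huv by (auto simp: u v h_def)
    then show "u = v"
      using ab mod_self by (simp add: u v ap_term_through)
  qed
  moreover have "h u \<in> Sigma params grid" if "u \<in> ?Q" for u
  proof -
    obtain l i j a b where u: "u = (l, (i, j), (a, b))" by (metis prod.exhaust)
    have "l \<in> {1..<n}" "i \<in> ?R" "j \<in> ?R" and ab: "(a, b) \<in> triangles"
      using that by (auto simp: u)
    moreover have "a mod n = a" "b mod n = b"
      using ab mod_self by (auto simp: triangles_def fibre_A_def)
    ultimately show ?thesis
      using n_ge_2 by (auto simp: u h_def mem_params grid_def ap_term_through)
  qed
  ultimately have "card ?Q \<le> card (Sigma params grid)"
    using finite_params finite_grid by (intro card_inj_on_le) blast+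
  then show ?thesis
    using finite_params finite_grid
    by (simp add: card_cartesian_product card_SigmaI power2_eq_square ac_simps)
qed

lemma sum_card_row_collisions_le:
  "(\<Sum>p\<in>params. card (row_collisions (grid p)))
     \<le> L ^ 3 * card (SIGMA a:A. fibre_A a \<times> fibre_A a)"
proof -
  let ?R = "{0..<int L}"
  define h where "h = (\<lambda>((l :: int, s :: int, t :: int), ((i :: int, j :: int), (i' :: int, j' :: int))).
      ((i, j, j'), (ap_term n l s i, ap_term n l t j, ap_term n l t j')))"
  have "inj_on h (SIGMA p:params. row_collisions (grid p))"
  proof (rule inj_onI)
    fix u v assume u_in: "u \<in> (SIGMA p:params. row_collisions (grid p))"
      and v_in: "v \<in> (SIGMA p:params. row_collisions (grid p))" and huv: "h u = h v"
    obtain l s t i j i' j' where u: "u = ((l, s, t), ((i, j), (i', j')))" by (metis prod.exhaust)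
    obtain l2 s2 t2 i2 j2 i2' j2' where v: "v = ((l2, s2, t2), ((i2, j2), (i2', j2')))"
      by (metis prod.exhaust)
    have hu: "(l, s, t) \<in> params" "(i, j) \<in> grid (l, s, t)" "(i', j') \<in> grid (l, s, t)"
      "i' = i" "j \<noteq> j'"
      using u_in by (auto simp: u row_collisions_def)
    have hv: "(l2, s2, t2) \<in> params" "i2' = i2"
      using v_in by (auto simp: v row_collisions_def)
    have eq: "i2 = i" "j2 = j" "j2' = j'" "ap_term n l s i = ap_term n l2 s2 i"
      "ap_term n l t j = ap_term n l2 t2 j" "ap_term n l t j' = ap_term n l2 t2 j'"
      using huv by (auto simp: u v h_def)
    have "l = l2 \<and> t = t2"
      using hu hv eq L_less ap_term_determined[OF prime_n, of l l2 t t2 j j']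
      by (auto simp: mem_params mem_grid)
    moreover from this have "s = s2"
      using hu(1) hv(1) eq(4) ap_term_start_inj by (auto simp: mem_params)
    ultimately show "u = v"
      using hu hv eq by (simp add: u v)
  qed
  moreover have "h ` (SIGMA p:params. row_collisions (grid p))
                   \<subseteq> (?R \<times> ?R \<times> ?R) \<times> (SIGMA a:A. fibre_A a \<times> fibre_A a)"
    by (auto simp: h_def row_collisions_def mem_grid fibre_A_def ap_term_third_vertex)
  moreover have "finite ((?R \<times> ?R \<times> ?R) \<times> (SIGMA a:A. fibre_A a \<times> fibre_A a))"
    using finite_sets finite_fibres by auto
  ultimately have "card (SIGMA p:params. row_collisions (grid p))
                     \<le> card ((?R \<times> ?R \<times> ?R) \<times> (SIGMA a:A. fibre_A a \<times> fibre_A a))"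
    by (rule card_inj_on_le)
  then show ?thesis
    using finite_params finite_grid finite_collisions
    by (simp add: card_SigmaI card_cartesian_product power3_eq_cube)
qed

lemma sum_card_column_collisions_le:
  "(\<Sum>p\<in>params. card (column_collisions (grid p)))
     \<le> L ^ 3 * card (SIGMA b:B. fibre_B b \<times> fibre_B b)"
proof -
  let ?R = "{0..<int L}"
  define h where "h = (\<lambda>((l :: int, s :: int, t :: int), ((i :: int, j :: int), (i' :: int, j' :: int))).
      ((j, i, i'), (ap_term n l t j, ap_term n l s i, ap_term n l s i')))"
  have "inj_on h (SIGMA p:params. column_collisions (grid p))"
  proof (rule inj_onI)
    fix u v assume u_in: "u \<in> (SIGMA p:params. column_collisions (grid p))"
      and v_in: "v \<in> (SIGMA p:params. column_collisions (grid p))" and huv: "h u = h v"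
    obtain l s t i j i' j' where u: "u = ((l, s, t), ((i, j), (i', j')))" by (metis prod.exhaust)
    obtain l2 s2 t2 i2 j2 i2' j2' where v: "v = ((l2, s2, t2), ((i2, j2), (i2', j2')))"
      by (metis prod.exhaust)
    have hu: "(l, s, t) \<in> params" "(i, j) \<in> grid (l, s, t)" "(i', j') \<in> grid (l, s, t)"
      "j' = j" "i \<noteq> i'"
      using u_in by (auto simp: u column_collisions_def)
    have hv: "(l2, s2, t2) \<in> params" "j2' = j2"
      using v_in by (auto simp: v column_collisions_def)
    have eq: "j2 = j" "i2 = i" "i2' = i'" "ap_term n l t j = ap_term n l2 t2 j"
      "ap_term n l s i = ap_term n l2 s2 i" "ap_term n l s i' = ap_term n l2 s2 i'"
      using huv by (auto simp: u v h_def)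
    have "l = l2 \<and> s = s2"
      using hu hv eq L_less ap_term_determined[OF prime_n, of l l2 s s2 i i']
      by (auto simp: mem_params mem_grid)
    moreover from this have "t = t2"
      using hu(1) hv(1) eq(4) ap_term_start_inj by (auto simp: mem_params)
    ultimately show "u = v"
      using hu hv eq by (simp add: u v)
  qed
  moreover have "h ` (SIGMA p:params. column_collisions (grid p))
                   \<subseteq> (?R \<times> ?R \<times> ?R) \<times> (SIGMA b:B. fibre_B b \<times> fibre_B b)"
    by (auto simp: h_def column_collisions_def mem_grid fibre_B_def ap_term_third_vertex')
  moreover have "finite ((?R \<times> ?R \<times> ?R) \<times> (SIGMA b:B. fibre_B b \<times> fibre_B b))"
    using finite_sets finite_fibres by auto
  ultimately have "card (SIGMA p:params. column_collisions (grid p))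
                     \<le> card ((?R \<times> ?R \<times> ?R) \<times> (SIGMA b:B. fibre_B b \<times> fibre_B b))"
    by (rule card_inj_on_le)
  then show ?thesis
    using finite_params finite_grid finite_collisions
    by (simp add: card_SigmaI card_cartesian_product power3_eq_cube)
qed

lemma sum_card_antidiagonal_collisions_le:
  "(\<Sum>p\<in>params. card (antidiagonal_collisions (grid p)))
     \<le> L ^ 3 * card (SIGMA c:C. fibre_C c \<times> fibre_C c)"
proof -
  let ?R = "{0..<int L}"
  define h where "h = (\<lambda>((l :: int, s :: int, t :: int), ((i :: int, j :: int), (i' :: int, j' :: int))).
      ((i, j, i'), ((- s - t - l * (i + j)) mod n, ap_term n l s i, ap_term n l s i')))"
  have "inj_on h (SIGMA p:params. antidiagonal_collisions (grid p))"
  proof (rule inj_onI)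
    fix u v assume u_in: "u \<in> (SIGMA p:params. antidiagonal_collisions (grid p))"
      and v_in: "v \<in> (SIGMA p:params. antidiagonal_collisions (grid p))" and huv: "h u = h v"
    obtain l s t i j i' j' where u: "u = ((l, s, t), ((i, j), (i', j')))" by (metis prod.exhaust)
    obtain l2 s2 t2 i2 j2 i2' j2' where v: "v = ((l2, s2, t2), ((i2, j2), (i2', j2')))"
      by (metis prod.exhaust)
    have hu: "(l, s, t) \<in> params" "(i, j) \<in> grid (l, s, t)" "(i', j') \<in> grid (l, s, t)"
      "i + j = i' + j'" "i \<noteq> i'"
      using u_in by (auto simp: u antidiagonal_collisions_def)
    have hv: "(l2, s2, t2) \<in> params" "i2 + j2 = i2' + j2'"
      using v_in by (auto simp: v antidiagonal_collisions_def)
    have eq: "i2 = i" "j2 = j" "i2' = i'" "(- s - t - l * (i + j)) mod n = (- s2 - t2 - l2 * (i + j)) mod n"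
      "ap_term n l s i = ap_term n l2 s2 i" "ap_term n l s i' = ap_term n l2 s2 i'"
      using huv by (auto simp: u v h_def)
    have ls: "l = l2 \<and> s = s2"
      using hu hv eq L_less ap_term_determined[OF prime_n, of l l2 s s2 i i']
      by (auto simp: mem_params mem_grid)
    then have "n dvd t2 - t"
      using eq(4) by (simp add: mod_eq_dvd_iff)
    then have "t = t2"
      using hu(1) hv(1) eq_if_dvd_diff_int[of t2 n t] by (auto simp: mem_params)
    moreover have "j2' = j'"
      using hu(4) hv(2) eq by simp
    ultimately show "u = v"
      using ls eq by (simp add: u v)
  qed
  moreover have "h ` (SIGMA p:params. antidiagonal_collisions (grid p))
                   \<subseteq> (?R \<times> ?R \<times> ?R) \<times> (SIGMA c:C. fibre_C c \<times> fibre_C c)"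
  proof
    fix w assume "w \<in> h ` (SIGMA p:params. antidiagonal_collisions (grid p))"
    then obtain l s t i j i' j' where w: "w = h ((l, s, t), ((i, j), (i', j')))"
      and "(i, j) \<in> grid (l, s, t)" "(i', j') \<in> grid (l, s, t)" "i + j = i' + j'"
      by (auto simp: antidiagonal_collisions_def)
    then show "w \<in> (?R \<times> ?R \<times> ?R) \<times> (SIGMA c:C. fibre_C c \<times> fibre_C c)"
      using ap_term_from_third_vertex[of i j i j s t l n]
        ap_term_from_third_vertex[of i j i' j' s t l n]
      by (simp add: h_def mem_grid fibre_C_def)
  qed
  moreover have "finite ((?R \<times> ?R \<times> ?R) \<times> (SIGMA c:C. fibre_C c \<times> fibre_C c))"
    using finite_sets finite_fibres by auto
  ultimately have "card (SIGMA p:params. antidiagonal_collisions (grid p))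
                     \<le> card ((?R \<times> ?R \<times> ?R) \<times> (SIGMA c:C. fibre_C c \<times> fibre_C c))"
    by (rule card_inj_on_le)
  then show ?thesis
    using finite_params finite_grid finite_collisions
    by (simp add: card_SigmaI card_cartesian_product power3_eq_cube)
qed

lemma sum_card_collisions_le:
  fixes d :: real
  assumes d_nonneg: "0 \<le> d"
    and deg_A: "\<And>a. a \<in> A \<Longrightarrow> real (card (fibre_A a)) \<le> d"
    and deg_B: "\<And>b. b \<in> B \<Longrightarrow> real (card (fibre_B b)) \<le> d"
    and deg_C: "\<And>c. c \<in> C \<Longrightarrow> real (card (fibre_C c)) \<le> d"
  shows "(\<Sum>p\<in>params. real (card (row_collisions (grid p)))
            + real (card (column_collisions (grid p)))
            + real (card (antidiagonal_collisions (grid p))))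
           \<le> 3 * real L ^ 3 * (d * real (card triangles))"
proof -
  define T where "T = real (card triangles)"
  have row: "(\<Sum>p\<in>params. real (card (row_collisions (grid p)))) \<le> real L ^ 3 * (d * T)"
  proof -
    have "(\<Sum>p\<in>params. real (card (row_collisions (grid p))))
            \<le> real L ^ 3 * real (card (SIGMA a:A. fibre_A a \<times> fibre_A a))"
      using of_nat_mono[OF sum_card_row_collisions_le] by simp
    also have "\<dots> \<le> real L ^ 3 * (d * T)"
      using card_Sigma_squares_le[of A fibre_A d] finite_sets finite_fibres deg_A
      unfolding T_def triangles_def by (intro mult_left_mono) auto
    finally show ?thesis .
  qed
  have column: "(\<Sum>p\<in>params. real (card (column_collisions (grid p)))) \<le> real L ^ 3 * (d * T)"
  proof -
    have "(\<Sum>p\<in>params. real (card (column_collisions (grid p))))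
            \<le> real L ^ 3 * real (card (SIGMA b:B. fibre_B b \<times> fibre_B b))"
      using of_nat_mono[OF sum_card_column_collisions_le] by simp
    also have "\<dots> \<le> real L ^ 3 * (d * real (card (Sigma B fibre_B)))"
      using card_Sigma_squares_le[of B fibre_B d] finite_sets finite_fibres deg_B
      by (intro mult_left_mono) auto
    also have "\<dots> \<le> real L ^ 3 * (d * T)"
      using card_Sigma_fibre_B_le d_nonneg by (simp add: T_def mult_left_mono)
    finally show ?thesis .
  qed
  have antidiagonal:
    "(\<Sum>p\<in>params. real (card (antidiagonal_collisions (grid p)))) \<le> real L ^ 3 * (d * T)"
  proof -
    have "(\<Sum>p\<in>params. real (card (antidiagonal_collisions (grid p))))
            \<le> real L ^ 3 * real (card (SIGMA c:C. fibre_C c \<times> fibre_C c))"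
      using of_nat_mono[OF sum_card_antidiagonal_collisions_le] by simp
    also have "\<dots> \<le> real L ^ 3 * (d * real (card (Sigma C fibre_C)))"
      using card_Sigma_squares_le[of C fibre_C d] finite_sets finite_fibres deg_C
      by (intro mult_left_mono) auto
    also have "\<dots> \<le> real L ^ 3 * (d * T)"
      using card_Sigma_fibre_C_le d_nonneg by (simp add: T_def mult_left_mono)
    finally show ?thesis .
  qed
  show ?thesis
    using row column antidiagonal by (simp add: sum.distrib T_def)
qed

lemma exists_grid_with_many_isolated_points:
  fixes d :: real
  assumes d_nonneg: "0 \<le> d"
    and deg_A: "\<And>a. a \<in> A \<Longrightarrow> real (card (fibre_A a)) \<le> d"
    and deg_B: "\<And>b. b \<in> B \<Longrightarrow> real (card (fibre_B b)) \<le> d"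
    and deg_C: "\<And>c. c \<in> C \<Longrightarrow> real (card (fibre_C c)) \<le> d"
    and small: "6 * real L * d \<le> real_of_int n - 1"
  shows "\<exists>p\<in>params. real L ^ 2 * real (card triangles)
                      \<le> 2 * (real_of_int n)\<^sup>2 * real (card (isolated_points (grid p)))"
proof -
  define iso where "iso p = real (card (isolated_points (grid p)))" for p
  define T where "T = real (card triangles)"
  have "real (nat (n - 1) * L\<^sup>2 * card triangles) \<le> real (\<Sum>p\<in>params. card (grid p))"
    using card_triangles_le_sum_card_grid by (rule of_nat_mono)
  then have "(real_of_int n - 1) * (real L ^ 2 * T) \<le> (\<Sum>p\<in>params. real (card (grid p)))"
    using n_ge_2 by (simp add: T_def of_nat_nat mult.assoc)
  also have "\<dots> \<le> (\<Sum>p\<in>params. iso p + real (card (row_collisions (grid p)))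
                    + real (card (column_collisions (grid p)))
                    + real (card (antidiagonal_collisions (grid p))))"
    using card_le_isolated_points_plus_collisions[OF finite_grid]
    by (intro sum_mono) (simp add: iso_def flip: of_nat_add)
  also have "\<dots> \<le> (\<Sum>p\<in>params. iso p) + 3 * real L ^ 3 * (d * T)"
    using sum_card_collisions_le[OF d_nonneg deg_A deg_B deg_C]
    by (simp add: sum.distrib T_def add.assoc)
  also have "3 * real L ^ 3 * (d * T) \<le> (real_of_int n - 1) / 2 * (real L ^ 2 * T)"
  proof -
    have "3 * real L ^ 3 * (d * T) = (3 * real L * d) * (real L ^ 2 * T)"
      by (simp add: power2_eq_square power3_eq_cube)
    also have "\<dots> \<le> (real_of_int n - 1) / 2 * (real L ^ 2 * T)"
      using small by (intro mult_right_mono) (auto simp: T_def)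
    finally show ?thesis .
  qed
  finally have iso_sum: "(real_of_int n - 1) / 2 * (real L ^ 2 * T) \<le> (\<Sum>p\<in>params. iso p)"
    by simp
  have "params \<noteq> {}"
    using n_ge_2 by (auto simp: params_def)
  then have "Max (iso ` params) \<in> iso ` params"
    using finite_params by (intro Max_in) auto
  then obtain p where p: "p \<in> params" "iso p = Max (iso ` params)"
    by (metis imageE)
  then have "(\<Sum>q\<in>params. iso q) \<le> real (card params) * iso p"
    using finite_params by (intro sum_bounded_above) simp
  then have "(real_of_int n - 1) * (real L ^ 2 * T) \<le> (real_of_int n - 1) * (2 * (real_of_int n)\<^sup>2 * iso p)"
    using iso_sum card_params by (simp add: algebra_simps)
  then have "real L ^ 2 * T \<le> 2 * (real_of_int n)\<^sup>2 * iso p"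
    using n_ge_2 by (simp add: mult_le_cancel_left)
  then show ?thesis
    using p(1) unfolding iso_def T_def by blast
qed

end

lemma matching_bound_fun_pos: "matching_bound_fun f \<Longrightarrow> 0 < x \<Longrightarrow> 0 < f x"
  by (simp add: matching_bound_fun_def)

lemma matching_bound_fun_matching:
  "matching_bound_fun f \<Longrightarrow> 1 \<le> M \<Longrightarrow> additive_matching M m x y z \<Longrightarrow> real m \<le> f (real M) * real M"
  unfolding matching_bound_fun_def by blast

lemma matching_bound_fun_antimono: "matching_bound_fun f \<Longrightarrow> 0 < a \<Longrightarrow> a \<le> b \<Longrightarrow> f b \<le> f a"
  unfolding matching_bound_fun_def by blast

lemma matching_bound_fun_mult_strict_mono:
  "matching_bound_fun f \<Longrightarrow> 0 < a \<Longrightarrow> a < b \<Longrightarrow> a * f a < b * f b"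
  unfolding matching_bound_fun_def by blast

lemma matching_bound_fun_ge_inverse:
  assumes f: "matching_bound_fun f" and "1 \<le> M" "0 < x" "x \<le> real M"
  shows "1 \<le> real M * f x"
proof -
  have "additive_matching M 1 (\<lambda>_. 0) (\<lambda>_. 0) (\<lambda>_. 0)"
    by (simp add: additive_matching_def)
  then have "1 \<le> f (real M) * real M"
    using matching_bound_fun_matching[OF f \<open>1 \<le> M\<close>] by fastforce
  also have "\<dots> \<le> f x * real M"
    using matching_bound_fun_antimono[OF f \<open>0 < x\<close> \<open>x \<le> real M\<close>] by (simp add: mult_right_mono)
  finally show ?thesis by (simp add: mult.commute)
qed

lemma card_matching_lt:
  assumes f: "matching_bound_fun f" and "additive_matching (2 * L) m x y z"
    and "1 \<le> L" "2 * real L < 1 / d"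
  shows "real m < f (1 / d) / d"
proof -
  have "real m \<le> 2 * real L * f (2 * real L)"
    using matching_bound_fun_matching[OF f _ assms(2)] \<open>1 \<le> L\<close> by (simp add: mult.commute)
  also have "\<dots> < 1 / d * f (1 / d)"
    using matching_bound_fun_mult_strict_mono[OF f _ assms(4)] \<open>1 \<le> L\<close> by simp
  finally show ?thesis by simp
qed

lemma exists_grid_length:
  fixes d :: real
  assumes "0 < d" "d \<le> 1 / 14"
  shows "\<exists>L. 1 \<le> L \<and> 7 * real L * d \<le> 1 \<and> 1 / (14 * d) \<le> real L"
proof -
  define x where "x = 1 / (7 * d)"
  define L where "L = nat \<lfloor>x\<rfloor>"
  have x_ge: "2 \<le> x"
    using assms by (simp add: x_def field_simps)
  then have L_x: "real L \<le> x" "x - 1 < real L"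
    unfolding L_def by linarith+
  have "7 * real L * d \<le> 1"
    using L_x(1) assms by (simp add: x_def field_simps)
  moreover have "1 / (14 * d) \<le> real L"
    using L_x x_ge assms by (simp add: x_def field_simps)
  moreover have "1 \<le> L"
    using L_x x_ge by linarith
  ultimately show ?thesis by blast
qed

lemma card_le_of_small_density:
  fixes f :: "real \<Rightarrow> real" and N :: nat and A B C :: "int set" and d1 d2 :: real
  assumes f: "matching_bound_fun f" and prime: "prime N"
    and sub: "A \<subseteq> {0..<int N}" "B \<subseteq> {0..<int N}" "C \<subseteq> {0..<int N}"
    and d1: "0 < d1" "d1 \<le> d2" and d2_small: "d2 \<le> 1 / 14" and d2_N: "1 \<le> d2 * real N"
    and hA: "degree_bounds N d1 d2 A B C" and hB: "degree_bounds N d1 d2 B A C"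
    and hC: "degree_bounds N d1 d2 C A B"
  shows "real (card A) \<le> 392 * (d2 / d1) * f (1 / d2) * real N"
proof -
  have d2: "0 < d2" using d1 by linarith
  define F where "F = f (1 / d2)"
  obtain L where "1 \<le> L" and L_le: "7 * real L * d2 \<le> 1" and L_ge: "1 / (14 * d2) \<le> real L"
    using exists_grid_length[OF d2 d2_small] by blast
  have "d2 * real N \<le> 1 / 14 * real N"
    using d2_small by (intro mult_right_mono) auto
  then have N_ge: "14 \<le> real N"
    using d2_N by linarith
  interpret progression_grids "int N" A B C L
  proof
    have "7 * real L * d2 \<le> d2 * real N" using L_le d2_N by linarith
    then have "7 * real L \<le> real N" using d2 by simp
    then have "real L < real N" using \<open>1 \<le> L\<close> by linarith
    then show "int L < int N" by simp
  qed (use prime sub in auto)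
  have small: "6 * real L * (d2 * real N) \<le> real_of_int (int N) - 1"
  proof -
    have "6 * real L * (d2 * real N) = 6 / 7 * (7 * real L * d2) * real N" by simp
    also have "\<dots> \<le> 6 / 7 * 1 * real N"
      using L_le by (intro mult_left_mono mult_right_mono) auto
    finally have "6 * real L * (d2 * real N) \<le> 6 / 7 * real N" by simp
    then show ?thesis using N_ge by linarith
  qed
  obtain p where p: "real L ^ 2 * real (card triangles)
                       \<le> 2 * (real N)\<^sup>2 * real (card (isolated_points (grid p)))"
    using exists_grid_with_many_isolated_points[of "d2 * real N"] small d2 hA hB hC
    by (auto simp: degree_bounds_def fibre_A_def fibre_B_def fibre_C_def)
  obtain x y z where matching: "additive_matching (2 * L) (card (isolated_points (grid p))) x y z"
    using additive_matching_grid by blast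
  have "2 * real L < 1 / d2"
    using L_le d2 by (simp add: field_simps)
  then have m: "real (card (isolated_points (grid p))) < F / d2"
    unfolding F_def using card_matching_lt[OF f matching \<open>1 \<le> L\<close>] by blast
  define X where "X = real (card A) * (d1 * real N)"
  have "X \<le> real (card triangles)"
    using hA unfolding X_def by (intro card_triangles_ge) (auto simp: degree_bounds_def fibre_A_def)
  then have "real L ^ 2 * X \<le> real L ^ 2 * real (card triangles)"
    by (intro mult_left_mono) auto
  also have "\<dots> \<le> 2 * (real N)\<^sup>2 * real (card (isolated_points (grid p)))"
    using p by simp
  also have "\<dots> \<le> 2 * (real N)\<^sup>2 * (F / d2)"
    using m by (intro mult_left_mono) auto
  finally have "real L ^ 2 * X \<le> 2 * (real N)\<^sup>2 * (F / d2)" .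
  moreover have "(1 / (14 * d2))\<^sup>2 * X \<le> real L ^ 2 * X"
    using L_ge d1 d2 by (intro mult_right_mono power_mono) (auto simp: X_def)
  ultimately have "(1 / (14 * d2))\<^sup>2 * X \<le> 2 * (real N)\<^sup>2 * (F / d2)"
    by linarith
  then have "(real (card A) * d1) * real N \<le> (392 * d2 * F * real N) * real N"
    using d2 by (simp add: X_def field_simps power2_eq_square)
  then have "real (card A) * d1 \<le> 392 * d2 * F * real N"
    using N_ge by (simp add: mult_le_cancel_right)
  then show ?thesis
    using d1 by (simp add: F_def field_simps)
qed

lemma card_le_matching_bound:
  fixes f :: "real \<Rightarrow> real" and N :: nat and A B C :: "int set" and d1 d2 :: real
  assumes f: "matching_bound_fun f" and prime: "prime N"
    and sub: "A \<subseteq> {0..<int N}" "B \<subseteq> {0..<int N}" "C \<subseteq> {0..<int N}"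
    and d1: "0 < d1" "d1 \<le> d2"
    and hA: "degree_bounds N d1 d2 A B C" and hB: "degree_bounds N d1 d2 B A C"
    and hC: "degree_bounds N d1 d2 C A B"
  shows "real (card A) \<le> 392 * (d2 / d1) * f (1 / d2) * real N"
proof (cases "A = {}")
  case True
  then show ?thesis
    using d1 matching_bound_fun_pos[OF f, of "1 / d2"] by simp
next
  case False
  then obtain a where "a \<in> A" by blast
  have N_pos: "0 < real N" using prime prime_gt_0_nat by simp
  have "0 < d1 * real N" using d1 N_pos by simp
  also have "\<dots> \<le> real (card {b \<in> B. (- a - b) mod int N \<in> C})"
    using hA \<open>a \<in> A\<close> by (simp add: degree_bounds_def)
  finally have "1 \<le> real (card {b \<in> B. (- a - b) mod int N \<in> C})"
    by (simp add: Suc_le_eq)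
  also have "\<dots> \<le> d2 * real N"
    using hA \<open>a \<in> A\<close> by (simp add: degree_bounds_def)
  finally have d2_N: "1 \<le> d2 * real N" .
  show ?thesis
  proof (cases "d2 \<le> 1 / 14")
    case True
    show ?thesis
      using card_le_of_small_density[OF f prime sub d1 True d2_N hA hB hC] .
  next
    case False
    have "card A \<le> card {0..<int N}" using sub(1) by (intro card_mono) auto
    then have "real (card A) \<le> 1 * real N" by simp
    also have "\<dots> \<le> (14 * f (1 / d2)) * real N"
      using False d1 matching_bound_fun_ge_inverse[OF f, of 14 "1 / d2"]
      by (intro mult_right_mono) (auto simp: field_simps)
    also have "\<dots> \<le> 392 * (d2 / d1) * f (1 / d2) * real N"
      using d1 matching_bound_fun_pos[OF f, of "1 / d2"]
      by (intro mult_right_mono) (auto simp: field_simps)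
    finally show ?thesis .
  qed
qed

theorem lemma2p1:
  shows "\<exists>K::real. \<forall>f N X Y Z \<delta>1 \<delta>2.
    matching_bound_fun f \<longrightarrow> prime (N::nat) \<longrightarrow>
    X \<subseteq> {0..<int N} \<longrightarrow> Y \<subseteq> {0..<int N} \<longrightarrow> Z \<subseteq> {0..<int N} \<longrightarrow>
    0 < \<delta>1 \<longrightarrow> \<delta>1 \<le> \<delta>2 \<longrightarrow>
    degree_bounds N \<delta>1 \<delta>2 X Y Z \<longrightarrow> degree_bounds N \<delta>1 \<delta>2 X Z Y \<longrightarrow>
    degree_bounds N \<delta>1 \<delta>2 Y X Z \<longrightarrow> degree_bounds N \<delta>1 \<delta>2 Y Z X \<longrightarrow>
    degree_bounds N \<delta>1 \<delta>2 Z X Y \<longrightarrow> degree_bounds N \<delta>1 \<delta>2 Z Y X \<longrightarrow>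
    real (card X) \<le> K * (\<delta>2 / \<delta>1) * f (1 / \<delta>2) * real N \<and>
    real (card Y) \<le> K * (\<delta>2 / \<delta>1) * f (1 / \<delta>2) * real N \<and>
    real (card Z) \<le> K * (\<delta>2 / \<delta>1) * f (1 / \<delta>2) * real N"
proof (intro exI[of _ 392] allI impI conjI)
  fix f N X Y Z and d1 d2 :: real
  assume f: "matching_bound_fun f" and prime: "prime N"
    and "X \<subseteq> {0..<int N}" "Y \<subseteq> {0..<int N}" "Z \<subseteq> {0..<int N}"
    and "0 < d1" "d1 \<le> d2"
    and "degree_bounds N d1 d2 X Y Z" "degree_bounds N d1 d2 X Z Y"
    and "degree_bounds N d1 d2 Y X Z" "degree_bounds N d1 d2 Y Z X"
    and "degree_bounds N d1 d2 Z X Y" "degree_bounds N d1 d2 Z Y X"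
  then show "real (card X) \<le> 392 * (d2 / d1) * f (1 / d2) * real N"
    and "real (card Y) \<le> 392 * (d2 / d1) * f (1 / d2) * real N"
    and "real (card Z) \<le> 392 * (d2 / d1) * f (1 / d2) * real N"
    using card_le_matching_bound[OF f prime] by blast+
qed

end
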